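(* Let $\nu\in\mathbb{R}$, $\beta^1>\beta^2>\beta^3>0$, and let $\mathcal H_0=-\sqrt{\beta^1\beta^2\beta^3}\,\alpha_0$, $\mathcal N=\frac1{\beta^1}+\frac1{\beta^2}+\frac1{\beta^3}-\nu+2\alpha_0$. The reciprocal transformation $dx=\mathcal H_0\,dy+\mathcal N\,d\tau_-$, $dt=d\tau_-$ transforms the Whitham equations of the first negative KdV flow $$\partial_{\tau_-}\beta^i+v^i(\boldsymbol\beta)\partial_y\beta^i=0,\qquad v^i=\frac{2}{\sqrt{\beta^1\beta^2\beta^3}}\left(1-\frac{\prod_{j\ne i}(\beta^i-\beta^j)}{\beta^i(\beta^i+\alpha_1)}\right),$$ into the Camassa--Holm Whitham equations $$\partial_t\beta^i+\tilde C^i(\boldsymbol\beta)\partial_x\beta^i=0,\qquad \tilde C^i(\boldsymbol\beta)=\frac1{\beta^1}+\frac1{\beta^2}+\frac1{\beta^3}-\nu+2\frac{\alpha_0\prod_{j\ne i}(\beta^i-\beta^j)}{\beta^i(\beta^i+\alpha_1)},$$ $i=1,2,3$. Conversely, the inverse reciprocal transformation $dy=\frac1{\mathcal H_0}dx-\frac{\mathcal N}{\mathcal H_0}dt$, $d\tau_-=dt$, transforms the second system into the first.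
   Context: $a$ is a closed cycle on $w^2=(\eta-\beta^1)(\eta-\beta^2)(\eta-\beta^3)$ encircling $[\beta^2,\beta^1]$; $\alpha_1$ and $\alpha_0$ are defined by $\oint_a\frac{(\eta+\alpha_1)d\eta}{w}=0$ and $\oint_a\frac{(1/\eta+\alpha_0)d\eta}{w}=0$. The variables $\beta^i=1/(u^i+\nu)$, where $u^1<u^2<u^3$ are the Riemann invariants of the Camassa--Holm one-phase Whitham equations; in these variables the CH Whitham speeds are the $\tilde C^i$ above. The statement means: if $\boldsymbol\beta(y,\tau_-)$ solves the first system and $(x,t)$ are defined by integrating $dx=\mathcal H_0dy+\mathcal Nd\tau_-$, $dt=d\tau_-$, then $\boldsymbol\beta$ as a function of $(x,t)$ solves the second, and vice versa. *)

theory Defs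
  imports "HOL-Analysis.Analysis"
begin

definition admissible :: "real^3 \<Rightarrow> bool" where
  "admissible b \<longleftrightarrow> b$1 > b$2 \<and> b$2 > b$3 \<and> b$3 > 0"

definition Pw :: "real^3 \<Rightarrow> real \<Rightarrow> real" where
  "Pw b \<eta> = (\<eta> - b$1) * (\<eta> - b$2) * (\<eta> - b$3)"

text \<open>On the cycle a encircling [beta2, beta1], w = i sqrt|Pw| (up to the sheet) and the
  cycle integral of f(eta) d eta / w equals a nonzero constant times the real integral of
  f / sqrt|Pw| over [beta2, beta1]; hence the normalisation conditions read as follows.\<close>
definition alpha1 :: "real^3 \<Rightarrow> real" where
  "alpha1 b = (THE a. integral {b$2..b$1} (\<lambda>\<eta>. (\<eta> + a) / sqrt \<bar>Pw b \<eta>\<bar>) = 0)"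

definition alpha0 :: "real^3 \<Rightarrow> real" where
  "alpha0 b = (THE a. integral {b$2..b$1} (\<lambda>\<eta>. (1 / \<eta> + a) / sqrt \<bar>Pw b \<eta>\<bar>) = 0)"

definition H0 :: "real^3 \<Rightarrow> real" where
  "H0 b = - sqrt (b$1 * b$2 * b$3) * alpha0 b"

definition NN :: "real \<Rightarrow> real^3 \<Rightarrow> real" where
  "NN \<nu> b = 1 / b$1 + 1 / b$2 + 1 / b$3 - \<nu> + 2 * alpha0 b"

definition prodd :: "real^3 \<Rightarrow> 3 \<Rightarrow> real" where
  "prodd b i = (\<Prod>j\<in>UNIV - {i}. (b$i - b$j))"

definition vneg :: "real^3 \<Rightarrow> 3 \<Rightarrow> real" where
  "vneg b i = 2 / sqrt (b$1 * b$2 * b$3) * (1 - prodd b i / (b$i * (b$i + alpha1 b)))"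

definition Cch :: "real \<Rightarrow> real^3 \<Rightarrow> 3 \<Rightarrow> real" where
  "Cch \<nu> b i = 1 / b$1 + 1 / b$2 + 1 / b$3 - \<nu>
      + 2 * (alpha0 b * prodd b i) / (b$i * (b$i + alpha1 b))"

text \<open>beta solves the diagonal system d_s beta^i + V^i(beta) d_r beta^i = 0 on U,
  where points of the plane are (r, s) (space, time).\<close>
definition diag_solution ::
  "(real^3 \<Rightarrow> 3 \<Rightarrow> real) \<Rightarrow> (real \<times> real) set \<Rightarrow> (real \<times> real \<Rightarrow> real^3) \<Rightarrow> bool" where
  "diag_solution V U \<beta> \<longleftrightarrow>
     (\<forall>p\<in>U. \<exists>D. (\<beta> has_derivative D) (at p) \<and>
        (\<forall>i. D (0, 1) $ i + V (\<beta> p) i * D (1, 0) $ i = 0))"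

end

theory Submission
  imports Defs
begin

text \<open>Both speed functions are built from the same quotient
  prodd b i / (b$i * (b$i + alpha1 b)), so Cch^i = NN + H0 vneg^i. For a diagonal system and a
  change of variables (y, s) \<mapsto> (X(y, s), s) with dX = a dy + c ds and a \<noteq> 0, the chain rule
  through the inverse map turns d_s beta + V d_y beta = 0 into d_s beta + (c + a V) d_x beta = 0;
  the image is open by invariance of domain. Taking (a, c) = (H0, NN), respectively
  (1/H0, -NN/H0), gives both directions once H0 \<noteq> 0. This holds because
  alpha0 = - (\<integral> |P|^(-1/2) / eta) / (\<integral> |P|^(-1/2)) over [beta2, beta1] is negative: the
  integrands are positive, and both integrals converge since near the endpoints they are
  dominated by 1 / sqrt ((beta1 - eta) (eta - beta2)), whose integral is pi.\<close>

lemma has_real_derivative_arcsin_chord: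
  fixes p q x :: real
  assumes "q < x" "x < p"
  shows "((\<lambda>x. arcsin ((2 * x - p - q) / (p - q))) has_real_derivative
           1 / sqrt ((p - x) * (x - q))) (at x)"
proof -
  define u where "u = (2 * x - p - q) / (p - q)"
  have qp: "q < p" using assms by simp
  have u: "-1 < u" "u < 1" using assms by (auto simp: u_def field_simps)
  have pos: "(p - x) * (x - q) > 0" using assms by simp
  have "1 - u\<^sup>2 = (2 * sqrt ((p - x) * (x - q)) / (p - q))\<^sup>2"
    using qp pos by (simp add: u_def power_divide field_simps) (simp add: power2_eq_square algebra_simps)
  then have sqrt_u: "sqrt (1 - u\<^sup>2) = 2 * sqrt ((p - x) * (x - q)) / (p - q)"
    using qp pos by simp
  have "((\<lambda>x. (2 * x - p - q) / (p - q)) has_real_derivative 2 / (p - q)) (at x)"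
    by (intro DERIV_cdivide) (auto intro!: derivative_eq_intros)
  from DERIV_chain2[OF DERIV_arcsin[OF u[unfolded u_def]] this]
  have "((\<lambda>x. arcsin ((2 * x - p - q) / (p - q))) has_real_derivative
          inverse (sqrt (1 - u\<^sup>2)) * (2 / (p - q))) (at x)"
    by (simp add: u_def)
  moreover have "inverse (sqrt (1 - u\<^sup>2)) * (2 / (p - q)) = 1 / sqrt ((p - x) * (x - q))"
    using qp pos by (simp add: sqrt_u field_simps)
  ultimately show ?thesis by simp
qed

lemma has_integral_inverse_sqrt_quadratic:
  fixes p q :: real
  assumes "q < p"
  shows "((\<lambda>x. 1 / sqrt ((p - x) * (x - q))) has_integral pi) {q..p}"
proof -
  define A where "A = (\<lambda>x. arcsin ((2 * x - p - q) / (p - q)))"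
  have "((\<lambda>x. 1 / sqrt ((p - x) * (x - q))) has_integral (A p - A q)) {q..p}"
  proof (rule fundamental_theorem_of_calculus_interior)
    show "continuous_on {q..p} A"
      unfolding A_def using assms by (intro continuous_intros) (auto simp: field_simps)
    show "(A has_vector_derivative 1 / sqrt ((p - x) * (x - q))) (at x)" if "x \<in> {q<..<p}" for x
      using has_real_derivative_arcsin_chord[of q x p] that
      by (simp add: A_def has_real_derivative_iff_has_vector_derivative)
  qed (use assms in simp)
  moreover have "(q - p) / (p - q) = -1"
    using assms by (simp add: field_simps)
  then have "A p - A q = pi"
    using assms by (simp add: A_def arcsin_minus)
  ultimately show ?thesis by simp
qed

lemma abs_cubic_between_roots:
  fixes p q r x :: real
  assumes "r < q" "q < x" "x < p"
  shows "\<bar>(x - p) * (x - q) * (x - r)\<bar> = (p - x) * (x - q) * (x - r)"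
proof -
  have "(x - p) * (x - q) * (x - r) < 0"
    using assms by (auto simp: mult_less_0_iff)
  then show ?thesis by (simp add: algebra_simps)
qed

lemma integrable_div_sqrt_cubic:
  fixes g :: "real \<Rightarrow> real" and p q r G :: real
  assumes rq: "r < q" and qp: "q < p"
    and g: "continuous_on {q<..<p} g" and bound: "\<And>x. x \<in> {q<..<p} \<Longrightarrow> \<bar>g x\<bar> \<le> G"
  shows "(\<lambda>x. g x / sqrt \<bar>(x - p) * (x - q) * (x - r)\<bar>) integrable_on {q..p}"
proof -
  define F where "F = (\<lambda>x. g x / sqrt \<bar>(x - p) * (x - q) * (x - r)\<bar>)"
  define h where "h = (\<lambda>x. G / sqrt (q - r) * (1 / sqrt ((p - x) * (x - q))))"
  have k: "(\<lambda>x. 1 / sqrt ((p - x) * (x - q))) integrable_on {q..p}"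
    using has_integral_inverse_sqrt_quadratic[OF qp] by blast
  have "h integrable_on {q..p}"
    using integrable_on_cmult_left[OF k, of "G / sqrt (q - r)"] by (simp add: h_def)
  then have h: "h integrable_on {q<..<p}"
    by (simp add: integrable_on_open_interval_real)
  have "continuous_on {q<..<p} F"
    unfolding F_def using g rq by (intro continuous_intros) auto
  then have F: "F \<in> borel_measurable (lebesgue_on {q<..<p})"
    by (rule continuous_imp_measurable_on_sets_lebesgue) auto
  have "norm (F x) \<le> h x" if x: "x \<in> {q<..<p}" for x
  proof -
    have "sqrt ((p - x) * (x - q)) * sqrt (q - r) \<le> sqrt \<bar>(x - p) * (x - q) * (x - r)\<bar>"
      using x rq by (simp add: abs_cubic_between_roots real_sqrt_mult mult_left_mono)
    moreover have "sqrt ((p - x) * (x - q)) * sqrt (q - r) > 0"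
      using x rq by simp
    ultimately have "\<bar>g x\<bar> / sqrt \<bar>(x - p) * (x - q) * (x - r)\<bar>
                     \<le> G / (sqrt ((p - x) * (x - q)) * sqrt (q - r))"
      using bound[OF x] by (intro frac_le) auto
    then show ?thesis by (simp add: F_def h_def abs_div mult.commute)
  qed
  then have "F absolutely_integrable_on {q<..<p}"
    by (intro measurable_bounded_by_integrable_imp_absolutely_integrable[OF F _ h]) auto
  then show ?thesis
    unfolding F_def[symmetric] integrable_on_open_interval_real[symmetric]
    using set_lebesgue_integral_eq_integral(1) by blast
qed

lemma integral_div_sqrt_cubic_pos:
  fixes g :: "real \<Rightarrow> real" and p q r m G :: real
  assumes rq: "r < q" and qp: "q < p" and m: "m > 0"
    and g: "continuous_on {q<..<p} g"
    and lower: "\<And>x. x \<in> {q<..<p} \<Longrightarrow> m \<le> g x" and upper: "\<And>x. x \<in> {q<..<p} \<Longrightarrow> g x \<le> G"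
  shows "integral {q..p} (\<lambda>x. g x / sqrt \<bar>(x - p) * (x - q) * (x - r)\<bar>) > 0"
proof -
  define F where "F = (\<lambda>x. g x / sqrt \<bar>(x - p) * (x - q) * (x - r)\<bar>)"
  define c where "c = m / sqrt ((p - q)\<^sup>2 * (p - r))"
  have "F integrable_on {q..p}"
    unfolding F_def using rq qp g
    by (rule integrable_div_sqrt_cubic) (use lower upper m in fastforce)
  then have F: "F integrable_on {q<..<p}"
    by (simp add: integrable_on_open_interval_real)
  have "c \<le> F x" if x: "x \<in> {q<..<p}" for x
  proof -
    have "(p - x) * (x - q) * (x - r) \<le> (p - q) * (p - q) * (p - r)"
      using x rq by (intro mult_mono) auto
    then have "sqrt \<bar>(x - p) * (x - q) * (x - r)\<bar> \<le> sqrt ((p - q)\<^sup>2 * (p - r))"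
      using x rq by (simp add: abs_cubic_between_roots power2_eq_square)
    moreover have "sqrt \<bar>(x - p) * (x - q) * (x - r)\<bar> > 0"
      using x rq by (simp add: abs_cubic_between_roots)
    ultimately show ?thesis
      unfolding c_def F_def using lower[OF x] m by (intro frac_le) auto
  qed
  then have "integral {q<..<p} (\<lambda>x. c) \<le> integral {q<..<p} F"
    using F by (intro integral_le) (auto simp: integrable_on_open_interval_real)
  moreover have "integral {q<..<p} (\<lambda>x. c) = c * (p - q)"
    using qp by (simp add: integral_open_interval_real[symmetric])
  moreover have "c * (p - q) > 0"
    using m qp rq by (simp add: c_def)
  ultimately have "integral {q<..<p} F > 0"
    by linarith
  then show ?thesis
    by (simp add: F_def integral_open_interval_real)
qed

lemma alpha0_neg:
  assumes "admissible b"
  shows "alpha0 b < 0"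
proof -
  define p q r where "p = b$1" and "q = b$2" and "r = b$3"
  have rq: "r < q" and qp: "q < p" and r: "r > 0"
    using assms by (auto simp: admissible_def p_def q_def r_def)
  define w where "w = (\<lambda>x. sqrt \<bar>(x - p) * (x - q) * (x - r)\<bar>)"
  have Pw: "sqrt \<bar>Pw b x\<bar> = w x" for x
    by (simp add: Pw_def w_def p_def q_def r_def)
  define I0 where "I0 = integral {q..p} (\<lambda>x. 1 / w x)"
  define I1 where "I1 = integral {q..p} (\<lambda>x. (1 / x) / w x)"
  have bounds: "1 / p \<le> 1 / x" "1 / x \<le> 1 / q" if "x \<in> {q<..<p}" for x
    using that rq r by (auto simp: field_simps)
  have cont: "continuous_on {q<..<p} (\<lambda>x. 1 / x)"
    using rq r by (intro continuous_intros) auto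
  have int0: "(\<lambda>x. 1 / w x) integrable_on {q..p}"
    unfolding w_def by (rule integrable_div_sqrt_cubic[OF rq qp, of _ 1]) auto
  have int1: "(\<lambda>x. (1 / x) / w x) integrable_on {q..p}"
    unfolding w_def using bounds rq r
    by (intro integrable_div_sqrt_cubic[OF rq qp cont, of "1 / q"]) auto
  have I0: "I0 > 0"
    unfolding I0_def w_def by (rule integral_div_sqrt_cubic_pos[OF rq qp, of 1 _ 1]) auto
  have I1: "I1 > 0"
    unfolding I1_def w_def using qp rq r bounds
    by (intro integral_div_sqrt_cubic_pos[OF rq qp _ cont, of "1 / p" "1 / q"]) auto
  have linear_in_a: "integral {q..p} (\<lambda>x. (1 / x + a) / sqrt \<bar>Pw b x\<bar>) = I1 + a * I0" for a
  proof -
    have "(\<lambda>x. (1 / x + a) / sqrt \<bar>Pw b x\<bar>) = (\<lambda>x. (1 / x) / w x + a * (1 / w x))"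
      by (simp add: Pw add_divide_distrib)
    then show ?thesis
      using integral_add[OF int1 integrable_on_cmult_left[OF int0, of a]]
        integral_mult_right[of "{q..p}" a "\<lambda>x. 1 / w x"]
      by (simp add: I0_def I1_def)
  qed
  have "alpha0 b = - I1 / I0"
    unfolding alpha0_def p_def[symmetric] q_def[symmetric]
    by (intro the_equality; simp only: linear_in_a) (use I0 in \<open>simp_all add: field_simps\<close>)
  with I0 I1 show ?thesis
    by (simp add: divide_pos_pos)
qed

lemma H0_nonzero:
  assumes "admissible b"
  shows "H0 b \<noteq> 0"
  using assms alpha0_neg[OF assms] by (simp add: H0_def admissible_def)

lemma Cch_eq_NN_plus_H0_vneg:
  assumes "admissible b"
  shows "Cch \<nu> b i = NN \<nu> b + H0 b * vneg b i"
proof -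
  have affine: "2 * (A * P) / Q = 2 * A + (- S * A) * (2 / S * (1 - P / Q))"
    if "S \<noteq> 0" for S A P Q :: real
    using that by (cases "Q = 0") (simp_all add: field_simps)
  have "sqrt (b$1 * b$2 * b$3) \<noteq> 0"
    using assms by (simp add: admissible_def)
  from affine[OF this] show ?thesis
    unfolding Cch_def NN_def H0_def vneg_def by simp
qed

lemma vneg_eq_Cch:
  assumes "admissible b"
  shows "vneg b i = - (NN \<nu> b / H0 b) + 1 / H0 b * Cch \<nu> b i"
  using H0_nonzero[OF assms] by (simp add: Cch_eq_NN_plus_H0_vneg[OF assms] field_simps)

lemma has_derivative_reciprocal_map:
  fixes X :: "real \<times> real \<Rightarrow> real" and a c :: real
  assumes "(X has_derivative (\<lambda>(h, k). a * h + c * k)) (at p)"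
  shows "((\<lambda>p. (X p, snd p)) has_derivative (\<lambda>(h, k). (a * h + c * k, k))) (at p)"
  using has_derivative_Pair[OF assms has_derivative_snd[OF has_derivative_ident]]
  by (simp add: case_prod_beta')

lemma has_derivative_inv_into_reciprocal:
  fixes X a c :: "real \<times> real \<Rightarrow> real"
  assumes U: "open U" and p: "p \<in> U"
    and dX: "\<And>p. p \<in> U \<Longrightarrow> (X has_derivative (\<lambda>(h, k). a p * h + c p * k)) (at p)"
    and a: "a p \<noteq> 0"
    and inj: "inj_on (\<lambda>p. (X p, snd p)) U"
  shows "(inv_into U (\<lambda>p. (X p, snd p)) has_derivative (\<lambda>(h, k). ((h - c p * k) / a p, k)))
           (at (X p, snd p))"
proof (rule has_derivative_inverse_strong[OF U p])
  show "continuous_on U (\<lambda>p. (X p, snd p))"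
    using has_derivative_reciprocal_map[OF dX] has_derivative_continuous
      continuous_at_imp_continuous_on by blast
  show "inv_into U (\<lambda>p. (X p, snd p)) (X q, snd q) = q" if "q \<in> U" for q
    using inv_into_f_f[OF inj that] by simp
  show "((\<lambda>p. (X p, snd p)) has_derivative (\<lambda>(h, k). (a p * h + c p * k, k))) (at p)"
    using has_derivative_reciprocal_map[OF dX[OF p]] .
  show "(\<lambda>(h, k). (a p * h + c p * k, k)) \<circ> (\<lambda>(h, k). ((h - c p * k) / a p, k)) = id"
    using a by (auto simp: fun_eq_iff)
qed

lemma diag_equation_reciprocal:
  fixes D :: "real \<times> real \<Rightarrow> real^'n" and a c v :: real
  assumes D: "linear D" and a: "a \<noteq> 0" and eq: "D (0, 1) $ i + v * D (1, 0) $ i = 0"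
  defines "L \<equiv> \<lambda>(h, k). ((h - c * k) / a, k)"
  shows "(D \<circ> L) (0, 1) $ i + (c + a * v) * (D \<circ> L) (1, 0) $ i = 0"
proof -
  have "(D \<circ> L) (1, 0) = (1 / a) *\<^sub>R D (1, 0)"
    using linear_cmul[OF D, of "1 / a" "(1, 0)"] by (simp add: L_def)
  then have L10: "(D \<circ> L) (1, 0) $ i = D (1, 0) $ i / a"
    by simp
  have "(D \<circ> L) (0, 1) = (- c / a) *\<^sub>R D (1, 0) + D (0, 1)"
    using linear_cmul[OF D, of "- c / a" "(1, 0)"] linear_add[OF D, of "(- c / a, 0)" "(0, 1)"]
    by (simp add: L_def)
  then have L01: "(D \<circ> L) (0, 1) $ i = D (0, 1) $ i - c / a * D (1, 0) $ i"
    by simp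
  have "(D \<circ> L) (0, 1) $ i + (c + a * v) * (D \<circ> L) (1, 0) $ i = D (0, 1) $ i + v * D (1, 0) $ i"
    unfolding L10 L01 using a by (simp add: field_simps)
  with eq show ?thesis by simp
qed

lemma diag_solution_reciprocal:
  fixes X a c :: "real \<times> real \<Rightarrow> real" and \<beta> :: "real \<times> real \<Rightarrow> real^3"
  assumes U: "open U"
    and dX: "\<And>p. p \<in> U \<Longrightarrow> (X has_derivative (\<lambda>(h, k). a p * h + c p * k)) (at p)"
    and a: "\<And>p. p \<in> U \<Longrightarrow> a p \<noteq> 0"
    and inj: "inj_on (\<lambda>p. (X p, snd p)) U"
    and sol: "diag_solution V U \<beta>"
    and W: "\<And>p i. p \<in> U \<Longrightarrow> W (\<beta> p) i = c p + a p * V (\<beta> p) i"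
  shows "open ((\<lambda>p. (X p, snd p)) ` U) \<and>
         diag_solution W ((\<lambda>p. (X p, snd p)) ` U) (\<beta> \<circ> inv_into U (\<lambda>p. (X p, snd p)))"
proof
  have "continuous_on U (\<lambda>p. (X p, snd p))"
    using has_derivative_reciprocal_map[OF dX] has_derivative_continuous
      continuous_at_imp_continuous_on by blast
  then show "open ((\<lambda>p. (X p, snd p)) ` U)"
    using U inj by (rule invariance_of_domain)
  show "diag_solution W ((\<lambda>p. (X p, snd p)) ` U) (\<beta> \<circ> inv_into U (\<lambda>p. (X p, snd p)))"
    unfolding diag_solution_def
  proof
    fix y assume "y \<in> (\<lambda>p. (X p, snd p)) ` U"
    then obtain p where p: "p \<in> U" and y: "y = (X p, snd p)" by blast
    obtain D where dB: "(\<beta> has_derivative D) (at p)"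
      and eq: "\<And>i. D (0, 1) $ i + V (\<beta> p) i * D (1, 0) $ i = 0"
      using sol p unfolding diag_solution_def by blast
    define L where "L = (\<lambda>(h, k). ((h - c p * k) / a p, k :: real))"
    have \<Psi>: "inv_into U (\<lambda>p. (X p, snd p)) y = p"
      using inv_into_f_f[OF inj p] y by simp
    have "(inv_into U (\<lambda>p. (X p, snd p)) has_derivative L) (at y)"
      using has_derivative_inv_into_reciprocal[of U p X a c] U p dX a inj by (simp add: y L_def)
    then have "((\<beta> \<circ> inv_into U (\<lambda>p. (X p, snd p))) has_derivative D \<circ> L) (at y)"
      using dB \<Psi> by (intro diff_chain_at) simp_all
    moreover have "(D \<circ> L) (0, 1) $ i + W (\<beta> p) i * (D \<circ> L) (1, 0) $ i = 0" for i
      unfolding W[OF p] L_def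
      using has_derivative_linear[OF dB] a[OF p] eq by (rule diag_equation_reciprocal)
    ultimately show "\<exists>D. ((\<beta> \<circ> inv_into U (\<lambda>p. (X p, snd p))) has_derivative D) (at y) \<and>
        (\<forall>i. D (0, 1) $ i + W ((\<beta> \<circ> inv_into U (\<lambda>p. (X p, snd p))) y) i * D (1, 0) $ i = 0)"
      using \<Psi> by auto
  qed
qed

theorem proposition5:
  fixes \<nu> :: real
  shows
  "(\<forall>(U :: (real \<times> real) set) (\<beta> :: real \<times> real \<Rightarrow> real^3) (X :: real \<times> real \<Rightarrow> real).
      open U \<and> (\<forall>p\<in>U. admissible (\<beta> p)) \<and> diag_solution vneg U \<beta> \<and>
      (\<forall>p\<in>U. (X has_derivative (\<lambda>(h, k). H0 (\<beta> p) * h + NN \<nu> (\<beta> p) * k)) (at p)) \<and>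
      inj_on (\<lambda>p. (X p, snd p)) U
      \<longrightarrow> open ((\<lambda>p. (X p, snd p)) ` U) \<and>
          diag_solution (Cch \<nu>) ((\<lambda>p. (X p, snd p)) ` U)
            (\<beta> \<circ> inv_into U (\<lambda>p. (X p, snd p))))
   \<and>
   (\<forall>(V :: (real \<times> real) set) (\<beta> :: real \<times> real \<Rightarrow> real^3) (Y :: real \<times> real \<Rightarrow> real).
      open V \<and> (\<forall>p\<in>V. admissible (\<beta> p)) \<and> diag_solution (Cch \<nu>) V \<beta> \<and>
      (\<forall>p\<in>V. (Y has_derivative
          (\<lambda>(h, k). (1 / H0 (\<beta> p)) * h - (NN \<nu> (\<beta> p) / H0 (\<beta> p)) * k)) (at p)) \<and>
      inj_on (\<lambda>p. (Y p, snd p)) V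
      \<longrightarrow> open ((\<lambda>p. (Y p, snd p)) ` V) \<and>
          diag_solution vneg ((\<lambda>p. (Y p, snd p)) ` V)
            (\<beta> \<circ> inv_into V (\<lambda>p. (Y p, snd p))))"
proof (rule conjI; intro allI impI; elim conjE)
  fix U :: "(real \<times> real) set" and \<beta> :: "real \<times> real \<Rightarrow> real^3" and X :: "real \<times> real \<Rightarrow> real"
  assume "open U" "\<forall>p\<in>U. admissible (\<beta> p)" "diag_solution vneg U \<beta>"
    "\<forall>p\<in>U. (X has_derivative (\<lambda>(h, k). H0 (\<beta> p) * h + NN \<nu> (\<beta> p) * k)) (at p)"
    "inj_on (\<lambda>p. (X p, snd p)) U"
  then show "open ((\<lambda>p. (X p, snd p)) ` U) \<and>
      diag_solution (Cch \<nu>) ((\<lambda>p. (X p, snd p)) ` U) (\<beta> \<circ> inv_into U (\<lambda>p. (X p, snd p)))"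
    by (intro diag_solution_reciprocal[where a = "\<lambda>p. H0 (\<beta> p)" and c = "\<lambda>p. NN \<nu> (\<beta> p)"])
       (simp_all add: H0_nonzero Cch_eq_NN_plus_H0_vneg)
next
  fix V :: "(real \<times> real) set" and \<beta> :: "real \<times> real \<Rightarrow> real^3" and Y :: "real \<times> real \<Rightarrow> real"
  assume "open V" "\<forall>p\<in>V. admissible (\<beta> p)" "diag_solution (Cch \<nu>) V \<beta>"
    "\<forall>p\<in>V. (Y has_derivative
        (\<lambda>(h, k). (1 / H0 (\<beta> p)) * h - (NN \<nu> (\<beta> p) / H0 (\<beta> p)) * k)) (at p)"
    "inj_on (\<lambda>p. (Y p, snd p)) V"
  then show "open ((\<lambda>p. (Y p, snd p)) ` V) \<and>
      diag_solution vneg ((\<lambda>p. (Y p, snd p)) ` V) (\<beta> \<circ> inv_into V (\<lambda>p. (Y p, snd p)))"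
    by (intro diag_solution_reciprocal[where a = "\<lambda>p. 1 / H0 (\<beta> p)"
          and c = "\<lambda>p. - (NN \<nu> (\<beta> p) / H0 (\<beta> p))"])
       (simp_all add: H0_nonzero vneg_eq_Cch[where \<nu> = \<nu>])
qed

end
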